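(* Let $f:\mathbb{R}^n_{>0}\to\mathbb{R}^n_{>0}$ be order-preserving, homogeneous, and multiplicatively convex. Let $\mathcal{C}$ be the set of strongly connected components of $\mathcal{G}(f)$ and $\mathcal{F}$ the set of final classes of $\mathcal{G}(f)$. Then $$r(f)=\max_{C\in\mathcal{C}}r(f^C_0)\quad\text{and}\quad \lambda(f)=\min_{C\in\mathcal{F}}r(f^C_0).$$
   Context: $[n]=\{1,\dots,n\}$; entrywise order. Order-preserving: $x\le y\Rightarrow f(x)\le f(y)$; homogeneous: $f(tx)=tf(x)$ for $t>0$. Multiplicatively convex: each entry of $\log\circ f\circ\exp$ (entrywise $\log,\exp$) is convex on $\mathbb{R}^n$. $f$ extends continuously to an order-preserving homogeneous map on $\mathbb{R}^n_{\ge0}$, also denoted $f$. $P^J_0(x)_j=x_j$ for $j\in J$, $0$ otherwise; $f^J_0=P^J_0fP^J_0$. For $g$ order-preserving homogeneous on $\mathbb{R}^n_{\ge0}$ (or $\mathbb{R}^n_{>0}$): $r(g)=\inf_{x\in\mathbb{R}^n_{>0}}\max_i g(x)_i/x_i$ and $\lambda(g)=\sup_{x\in\mathbb{R}^n_{>0}}\min_i g(x)_i/x_i$. $\mathcal{G}(f)$ is the directed graph on $[n]$ with an arc $i\to j$ when $\lim_{t\to\infty}f(\exp(te_{\{j\}}))_i=\infty$ ($e_{\{j\}}$ the $j$-th standard basis vector). A final class is a strongly connected component with no arcs leaving it. *)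

theory Defs
  imports "HOL-Analysis.Analysis"
begin

definition pos_vec :: "real^'n \<Rightarrow> bool" where
  "pos_vec x \<longleftrightarrow> (\<forall>i. 0 < x $ i)"

definition nonneg_vec :: "real^'n \<Rightarrow> bool" where
  "nonneg_vec x \<longleftrightarrow> (\<forall>i. 0 \<le> x $ i)"

definition order_preserving_pos :: "(real^'n \<Rightarrow> real^'n) \<Rightarrow> bool" where
  "order_preserving_pos f \<longleftrightarrow>
     (\<forall>x y. pos_vec x \<and> pos_vec y \<and> (\<forall>i. x $ i \<le> y $ i) \<longrightarrow> (\<forall>i. f x $ i \<le> f y $ i))"

definition homogeneous_pos :: "(real^'n \<Rightarrow> real^'n) \<Rightarrow> bool" where
  "homogeneous_pos f \<longleftrightarrow> (\<forall>x t. pos_vec x \<and> 0 < t \<longrightarrow> f (t *\<^sub>R x) = t *\<^sub>R f x)"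

definition mult_convex :: "(real^'n \<Rightarrow> real^'n) \<Rightarrow> bool" where
  "mult_convex f \<longleftrightarrow> (\<forall>i. convex_on UNIV (\<lambda>y::real^'n. ln (f (\<chi> k. exp (y $ k)) $ i)))"

text \<open>The continuous extension of an order-preserving homogeneous map from the open
  cone to the closed cone: ext f x = lim_{c -> 0+} f(x + c 1) = inf_{c>0} f(x + c 1).\<close>
definition ext_map :: "(real^'n \<Rightarrow> real^'n) \<Rightarrow> real^'n \<Rightarrow> real^'n" where
  "ext_map f x = (\<chi> i. INF c\<in>{0<..}. f (x + (\<chi> k. c)) $ i)"

definition proj0 :: "'n set \<Rightarrow> real^'n \<Rightarrow> real^'n" where
  "proj0 J x = (\<chi> j. if j \<in> J then x $ j else 0)"

definition f0 :: "'n set \<Rightarrow> (real^'n \<Rightarrow> real^'n) \<Rightarrow> real^'n \<Rightarrow> real^'n" where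
  "f0 J f = proj0 J \<circ> ext_map f \<circ> proj0 J"

definition upper_cw :: "(real^'n \<Rightarrow> real^'n) \<Rightarrow> real" where
  "upper_cw g = (INF x\<in>{x. pos_vec x}. Max (range (\<lambda>i. g x $ i / x $ i)))"

definition lower_cw :: "(real^'n \<Rightarrow> real^'n) \<Rightarrow> real" where
  "lower_cw g = (SUP x\<in>{x. pos_vec x}. Min (range (\<lambda>i. g x $ i / x $ i)))"

definition arc :: "(real^'n \<Rightarrow> real^'n) \<Rightarrow> 'n \<Rightarrow> 'n \<Rightarrow> bool" where
  "arc f i j \<longleftrightarrow>
     filterlim (\<lambda>t. f (\<chi> k. exp (if k = j then t else 0)) $ i) at_top at_top"

definition scc_of :: "(real^'n \<Rightarrow> real^'n) \<Rightarrow> 'n \<Rightarrow> 'n set" where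
  "scc_of f i = {j. (arc f)\<^sup>*\<^sup>* i j \<and> (arc f)\<^sup>*\<^sup>* j i}"

definition sccs :: "(real^'n \<Rightarrow> real^'n) \<Rightarrow> 'n set set" where
  "sccs f = range (scc_of f)"

definition final_classes :: "(real^'n \<Rightarrow> real^'n) \<Rightarrow> 'n set set" where
  "final_classes f = {C \<in> sccs f. \<forall>i j. i \<in> C \<and> arc f i j \<longrightarrow> j \<in> C}"

end

(*
  Multiplicative convexity makes f local: along a line x + t e_j in logarithmic coordinates,
  ln f(x)_i is convex in t, and when G(f) has no arc i -> j it is also bounded above, hence
  nonincreasing; with monotonicity, f(x)_i depends only on the x_j with i -> j.

  Since f^C_0 <= f, r(f^C_0) <= r(f). Conversely, let rho exceed every r(f^C_0). Vectors
  with f(x)_i < rho x_i for i in an arc-closed set S are built by induction on S: split off a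
  class C such that S - C stays arc-closed, use a y with f^C_0(y) < rho y (perturbed into
  the open cone) on C and the vector for S - C, scaled down, elsewhere; by locality the
  coordinates in S - C do not see C.

  If C is final, f agrees with f^C_0 on C, and a sub-eigenvector of f^C_0 bounds from above
  the smallest ratio f(x)_i / x_i of every x, so lambda(f) <= r(f^C_0). Conversely, let
  0 < rho < r(f^C_0) for all final C, and X_0 = 1, X_(n+1) = max(X_n, f(X_n) / rho). On every
  final class X is unbounded in some coordinate, for otherwise the normalised iterates
  rho'^-k f^k(1), rho < rho' < r(f^C_0), yield a sub-eigenvector of f^C_0 with ratio rho'.
  Unboundedness propagates backwards along arcs, hence to all coordinates, and once
  rho X_n,i <= f(X_n)_i holds it persists; so rho X_N <= f(X_N) for large N.
*)
theory Submission
  imports Defs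
begin

lemma convex_on_line:
  fixes g :: "'a::real_vector \<Rightarrow> real"
  assumes "convex_on UNIV g"
  shows "convex_on UNIV (\<lambda>u. g (a + u *\<^sub>R b))"
proof (rule convex_onI)
  fix t u v :: real assume t: "0 < t" "t < 1"
  have "a + ((1 - t) *\<^sub>R u + t *\<^sub>R v) *\<^sub>R b = (1 - t) *\<^sub>R (a + u *\<^sub>R b) + t *\<^sub>R (a + v *\<^sub>R b)"
    by (simp add: algebra_simps)
  then show "g (a + ((1 - t) *\<^sub>R u + t *\<^sub>R v) *\<^sub>R b) \<le> (1 - t) * g (a + u *\<^sub>R b) + t * g (a + v *\<^sub>R b)"
    using convex_onD[OF assms, of t] t by simp
qed simp

lemma convex_on_bounded_above_antimono:
  fixes h :: "real \<Rightarrow> real"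
  assumes cvx: "convex_on UNIV h" and bound: "\<And>u. h u \<le> B" and "s \<le> t"
  shows "h t \<le> h s"
proof (rule ccontr)
  assume "\<not> h t \<le> h s"
  with \<open>s \<le> t\<close> have st: "s < t" and ht: "h s < h t" by (auto simp: le_less)
  define \<sigma> where "\<sigma> = (h t - h s) / (t - s)"
  have \<sigma>: "0 < \<sigma>" using st ht unfolding \<sigma>_def by simp
  define T where "T = t + (B - h s) / \<sigma>"
  have "h s < B" using ht bound[of t] by simp
  then have tT: "t < T" using \<sigma> unfolding T_def by simp
  have "(h s - h t) / (s - t) \<le> (h s - h T) / (s - T)"
    using convex_on_slope_le(1)[OF cvx _ _ st tT] by simp
  then have "\<sigma> \<le> (h T - h s) / (T - s)"
    unfolding \<sigma>_def using minus_divide_divide[of "h t - h s" "t - s"]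
      minus_divide_divide[of "h T - h s" "T - s"] by simp
  then have "\<sigma> * (T - s) \<le> h T - h s" using st tT by (simp add: le_divide_eq)
  moreover have "\<sigma> * (T - s) > B - h s"
  proof -
    have "\<sigma> * (T - s) = (B - h s) + \<sigma> * (t - s)" using \<sigma> unfolding T_def by (simp add: field_simps)
    then show ?thesis using \<sigma> st by simp
  qed
  ultimately show False using bound[of T] by simp
qed

lemma filterlim_at_top_if_mono_unbounded:
  fixes g :: "'a::linorder \<Rightarrow> 'b::linorder"
  assumes "mono g" and "\<not> bdd_above (range g)"
  shows "filterlim g at_top at_top"
  unfolding filterlim_at_top eventually_at_top_linorder
proof
  fix Z
  from assms(2) obtain t where "Z < g t" by (auto simp: bdd_above_def not_le)
  then show "\<exists>N. \<forall>n\<ge>N. Z \<le> g n" using assms(1) by (meson monoD order.trans less_imp_le)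
qed

section \<open>Collatz-Wielandt numbers\<close>

lemma pos_vec_one: "pos_vec (\<chi> i. 1)"
  by (simp add: pos_vec_def)

lemma pos_vec_scaleR: "pos_vec x \<Longrightarrow> 0 < t \<Longrightarrow> pos_vec (t *\<^sub>R x)"
  by (simp add: pos_vec_def)

lemma pos_vec_add_const: "nonneg_vec p \<Longrightarrow> 0 < c \<Longrightarrow> pos_vec (p + (\<chi> k. c))"
  by (simp add: nonneg_vec_def pos_vec_def add_nonneg_pos)

lemma nonneg_vec_proj0: "pos_vec x \<Longrightarrow> nonneg_vec (proj0 C x)"
  by (simp add: pos_vec_def nonneg_vec_def proj0_def less_imp_le)

lemma f0_nth: "f0 C g x $ i = (if i \<in> C then ext_map g (proj0 C x) $ i else 0)"
  by (simp add: f0_def proj0_def)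

lemma upper_cw_le:
  fixes g :: "real^'n \<Rightarrow> real^'n"
  assumes g_nonneg: "\<And>x i. pos_vec x \<Longrightarrow> 0 \<le> g x $ i"
    and x: "pos_vec x" and sub: "\<And>i. g x $ i \<le> a * x $ i"
  shows "upper_cw g \<le> a"
proof -
  have "upper_cw g \<le> Max (range (\<lambda>i. g x $ i / x $ i))"
    unfolding upper_cw_def
  proof (rule cINF_lower)
    show "bdd_below ((\<lambda>x. Max (range (\<lambda>i. g x $ i / x $ i))) ` {x. pos_vec x})"
      by (rule bdd_belowI2[of _ 0])
         (auto simp: Max_ge_iff pos_vec_def intro!: divide_nonneg_pos g_nonneg)
  qed (use x in simp)
  also have "\<dots> \<le> a"
    using sub x by (simp add: pos_vec_def divide_le_eq mult.commute)
  finally show ?thesis .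
qed

lemma upper_cw_lessD:
  fixes g :: "real^'n \<Rightarrow> real^'n"
  assumes "upper_cw g < a"
  obtains x where "pos_vec x" "\<And>i. g x $ i < a * x $ i"
proof -
  have "(\<lambda>x. Max (range (\<lambda>i. g x $ i / x $ i))) ` {x. pos_vec x} \<noteq> {}"
    using pos_vec_one by blast
  from cInf_lessD[OF this] obtain x where x: "pos_vec x" and "Max (range (\<lambda>i. g x $ i / x $ i)) < a"
    using assms unfolding upper_cw_def by auto
  then have "g x $ i < a * x $ i" for i
    by (auto simp: pos_vec_def divide_less_eq mult.commute)
  with x that show ?thesis by blast
qed

lemma upper_cw_mono:
  fixes g h :: "real^'n \<Rightarrow> real^'n"
  assumes g_nonneg: "\<And>x i. pos_vec x \<Longrightarrow> 0 \<le> g x $ i"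
    and le: "\<And>x i. pos_vec x \<Longrightarrow> g x $ i \<le> h x $ i"
  shows "upper_cw g \<le> upper_cw h"
proof (rule dense_ge)
  fix a assume "upper_cw h < a"
  then obtain x where x: "pos_vec x" and "\<And>i. h x $ i < a * x $ i"
    using upper_cw_lessD by blast
  with le have "\<And>i. g x $ i \<le> a * x $ i" by (meson less_imp_le order_trans)
  then show "upper_cw g \<le> a" using upper_cw_le g_nonneg x by blast
qed

lemma lower_cw_ge:
  fixes g :: "real^'n \<Rightarrow> real^'n"
  assumes bdd: "bdd_above ((\<lambda>x. Min (range (\<lambda>i. g x $ i / x $ i))) ` {x. pos_vec x})"
    and x: "pos_vec x" and super: "\<And>i. a * x $ i \<le> g x $ i"
  shows "a \<le> lower_cw g"
proof -
  have "a \<le> Min (range (\<lambda>i. g x $ i / x $ i))"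
    using super x by (simp add: pos_vec_def le_divide_eq mult.commute)
  also have "\<dots> \<le> lower_cw g"
    unfolding lower_cw_def by (rule cSUP_upper) (use x bdd in auto)
  finally show ?thesis .
qed

lemma lower_cw_le:
  fixes g :: "real^'n \<Rightarrow> real^'n"
  assumes "\<And>x. pos_vec x \<Longrightarrow> \<exists>i. g x $ i \<le> a * x $ i"
  shows "lower_cw g \<le> a"
  unfolding lower_cw_def
proof (rule cSUP_least)
  show "{x. pos_vec x} \<noteq> {}"
    using pos_vec_one by blast
  fix x :: "real^'n" assume "x \<in> {x. pos_vec x}"
  then obtain i where x: "pos_vec x" and "g x $ i \<le> a * x $ i" using assms by blast
  then have "g x $ i / x $ i \<le> a" by (simp add: pos_vec_def divide_le_eq mult.commute)
  then show "Min (range (\<lambda>i. g x $ i / x $ i)) \<le> a" by (auto simp: Min_le_iff)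
qed

section \<open>Classes of the graph\<close>

definition arc_closed :: "(real^'n \<Rightarrow> real^'n) \<Rightarrow> 'n set \<Rightarrow> bool" where
  "arc_closed f S \<longleftrightarrow> (\<forall>i\<in>S. \<forall>j. arc f i j \<longrightarrow> j \<in> S)"

lemma final_classes_iff:
  "C \<in> final_classes f \<longleftrightarrow> (\<exists>i. C = scc_of f i) \<and> arc_closed f C"
  unfolding final_classes_def sccs_def arc_closed_def by blast

lemma scc_of_self: "i \<in> scc_of f i"
  unfolding scc_of_def by simp

lemma reaches_in_scc_of: "j \<in> scc_of f c \<Longrightarrow> k \<in> scc_of f c \<Longrightarrow> (arc f)\<^sup>*\<^sup>* j k"
  unfolding scc_of_def by (auto intro: rtranclp_trans)

lemma finite_sccs: "finite (sccs (f :: real^'n \<Rightarrow> real^'n))"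
  unfolding sccs_def by simp

lemma finite_final_classes: "finite (final_classes (f :: real^'n \<Rightarrow> real^'n))"
  unfolding final_classes_def using finite_sccs by simp

lemma in_scc_of_if_reach_card_le:
  fixes f :: "real^'n \<Rightarrow> real^'n"
  assumes ik: "(arc f)\<^sup>*\<^sup>* i k"
    and card: "card {l. (arc f)\<^sup>*\<^sup>* i l} \<le> card {l. (arc f)\<^sup>*\<^sup>* k l}"
  shows "k \<in> scc_of f i"
proof -
  have "{l. (arc f)\<^sup>*\<^sup>* k l} \<subseteq> {l. (arc f)\<^sup>*\<^sup>* i l}"
    using ik by (auto intro: rtranclp_trans)
  with card have "{l. (arc f)\<^sup>*\<^sup>* k l} = {l. (arc f)\<^sup>*\<^sup>* i l}"
    by (simp add: card_seteq)
  then have "(arc f)\<^sup>*\<^sup>* k i" by blast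
  with ik show ?thesis unfolding scc_of_def by simp
qed

lemma final_class_reachable:
  fixes f :: "real^'n \<Rightarrow> real^'n"
  obtains C j where "C \<in> final_classes f" "j \<in> C" "(arc f)\<^sup>*\<^sup>* i j"
proof -
  define reach where "reach j = card {l. (arc f)\<^sup>*\<^sup>* j l}" for j
  obtain j where ij: "(arc f)\<^sup>*\<^sup>* i j"
    and least: "\<And>l. (arc f)\<^sup>*\<^sup>* i l \<Longrightarrow> reach j \<le> reach l"
    using ex_has_least_nat[of "\<lambda>l. (arc f)\<^sup>*\<^sup>* i l" i reach] by auto
  have "arc_closed f (scc_of f j)"
    unfolding arc_closed_def
  proof (intro ballI allI impI)
    fix k l assume "k \<in> scc_of f j" "arc f k l"
    then have jl: "(arc f)\<^sup>*\<^sup>* j l"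
      unfolding scc_of_def by (auto intro: rtranclp.rtrancl_into_rtrancl)
    moreover have "reach j \<le> reach l" using ij jl by (meson least rtranclp_trans)
    ultimately show "l \<in> scc_of f j"
      unfolding reach_def by (rule in_scc_of_if_reach_card_le)
  qed
  then have "scc_of f j \<in> final_classes f" unfolding final_classes_iff by blast
  with ij scc_of_self that show ?thesis by blast
qed

lemma arc_closed_Diff_scc_of:
  fixes f :: "real^'n \<Rightarrow> real^'n"
  assumes closed: "arc_closed f S" and "S \<noteq> {}"
  obtains i where "i \<in> S" "arc_closed f (S - scc_of f i)"
proof -
  define reach where "reach j = card {l. (arc f)\<^sup>*\<^sup>* j l}" for j
  have "reach k < CARD('n) + 1" for k
    unfolding reach_def by (simp add: card_mono less_Suc_eq_le)
  then obtain i where iS: "i \<in> S" and greatest: "\<And>k. k \<in> S \<Longrightarrow> reach k \<le> reach i"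
    using ex_has_greatest_nat[of "\<lambda>k. k \<in> S" _ reach] \<open>S \<noteq> {}\<close> by blast
  have "arc_closed f (S - scc_of f i)"
    unfolding arc_closed_def
  proof (intro ballI allI impI)
    fix k l assume k: "k \<in> S - scc_of f i" and kl: "arc f k l"
    have "l \<notin> scc_of f i"
    proof
      assume "l \<in> scc_of f i"
      then have ki: "(arc f)\<^sup>*\<^sup>* k i"
        using kl unfolding scc_of_def by (auto intro: converse_rtranclp_into_rtranclp)
      have "reach k \<le> reach i" using greatest k by blast
      then have "i \<in> scc_of f k" unfolding reach_def by (rule in_scc_of_if_reach_card_le[OF ki])
      with k show False unfolding scc_of_def by simp
    qed
    with k kl closed show "l \<in> S - scc_of f i" unfolding arc_closed_def by blast
  qed
  with iS that show ?thesis by blast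
qed

section \<open>Order-preserving homogeneous maps\<close>

locale monotone_homogeneous =
  fixes f :: "real^'n \<Rightarrow> real^'n"
  assumes pos_vec_map: "\<And>x. pos_vec x \<Longrightarrow> pos_vec (f x)"
    and order_preserving: "order_preserving_pos f"
    and homogeneous: "homogeneous_pos f"
begin

lemma map_pos: "pos_vec x \<Longrightarrow> 0 < f x $ i"
  using pos_vec_map unfolding pos_vec_def by blast

lemma map_mono: "pos_vec x \<Longrightarrow> pos_vec y \<Longrightarrow> (\<And>k. x $ k \<le> y $ k) \<Longrightarrow> f x $ i \<le> f y $ i"
  using order_preserving unfolding order_preserving_pos_def by blast

lemma map_scaleR: "pos_vec x \<Longrightarrow> 0 < t \<Longrightarrow> f (t *\<^sub>R x) $ i = t * f x $ i"
  using homogeneous unfolding homogeneous_pos_def by simp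

lemma bounded_if_not_arc:
  assumes "\<not> arc f i j"
  obtains B where "\<And>t. f (\<chi> k. exp (if k = j then t else 0)) $ i \<le> B"
proof -
  have "mono (\<lambda>t. f (\<chi> k. exp (if k = j then t else 0)) $ i)"
    by (intro monoI map_mono) (auto simp: pos_vec_def)
  with assms have "bdd_above (range (\<lambda>t. f (\<chi> k. exp (if k = j then t else 0)) $ i))"
    unfolding arc_def using filterlim_at_top_if_mono_unbounded by metis
  with that show ?thesis by (auto simp: bdd_above_def)
qed

lemma bounded_on_line_if_not_arc:
  assumes no_arc: "\<not> arc f i j" and x: "pos_vec x"
  obtains B where "\<And>u. f (\<chi> k. if k = j then exp u else x $ k) $ i \<le> B"
proof -
  obtain B where B: "\<And>t. f (\<chi> k. exp (if k = j then t else 0)) $ i \<le> B"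
    using bounded_if_not_arc[OF no_arc] by blast
  define c where "c = Max (range (\<lambda>k. x $ k)) + 1"
  have x_Max: "x $ k \<le> Max (range (\<lambda>k. x $ k))" for k by simp
  have "0 < x $ j" using x by (simp add: pos_vec_def)
  then have xc: "x $ k \<le> c" and c: "1 \<le> c" for k
    unfolding c_def using x_Max[of j] x_Max[of k] by linarith+
  then have c0: "0 < c" by simp
  have "f (\<chi> k. if k = j then exp u else x $ k) $ i \<le> c * B" for u
  proof -
    have "f (\<chi> k. if k = j then exp u else x $ k) $ i
        \<le> f (c *\<^sub>R (\<chi> k. exp (if k = j then u else 0))) $ i"
    proof (rule map_mono[OF _ pos_vec_scaleR[OF _ c0]])
      show "pos_vec (\<chi> k. if k = j then exp u else x $ k)" using x by (simp add: pos_vec_def)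
      show "pos_vec (\<chi> k. exp (if k = j then u else 0))" by (simp add: pos_vec_def)
      show "(\<chi> k. if k = j then exp u else x $ k) $ k
          \<le> (c *\<^sub>R (\<chi> k. exp (if k = j then u else 0))) $ k" for k
        using c xc[of k] by (cases "k = j") simp_all
    qed
    also have "\<dots> \<le> c * B"
      using B[of u] c0 by (simp add: map_scaleR pos_vec_def)
    finally show ?thesis .
  qed
  with that show ?thesis by blast
qed

lemma Min_ratio_le:
  assumes x: "pos_vec x"
  shows "Min (range (\<lambda>i. f x $ i / x $ i)) \<le> Max (range (\<lambda>i. f (\<chi> k. 1) $ i))"
proof -
  have "Max (range (\<lambda>k. x $ k)) \<in> range (\<lambda>k. x $ k)" by (rule Max_in) auto
  then obtain i where i: "x $ i = Max (range (\<lambda>k. x $ k))" by (metis rangeE)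
  have xi: "0 < x $ i" using x by (simp add: pos_vec_def)
  have "f x $ i \<le> f (x $ i *\<^sub>R (\<chi> k. 1)) $ i"
    by (rule map_mono[OF x pos_vec_scaleR[OF pos_vec_one xi]]) (simp add: i)
  also have "\<dots> = x $ i * f (\<chi> k. 1) $ i" by (rule map_scaleR[OF pos_vec_one xi])
  finally have "f x $ i / x $ i \<le> f (\<chi> k. 1) $ i" using xi by (simp add: divide_le_eq mult.commute)
  also have "\<dots> \<le> Max (range (\<lambda>i. f (\<chi> k. 1) $ i))" by simp
  finally show ?thesis by (auto simp: Min_le_iff)
qed

lemma bdd_above_Min_ratios: "bdd_above ((\<lambda>x. Min (range (\<lambda>i. f x $ i / x $ i))) ` {x. pos_vec x})"
  by (rule bdd_aboveI2[where M = "Max (range (\<lambda>i. f (\<chi> k. 1) $ i))"]) (simp add: Min_ratio_le)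

lemma lower_cw_nonneg: "0 \<le> lower_cw f"
  using lower_cw_ge[OF bdd_above_Min_ratios pos_vec_one] map_pos[OF pos_vec_one] by (simp add: less_imp_le)

lemma ext_map_le_shift: "nonneg_vec p \<Longrightarrow> 0 < c \<Longrightarrow> ext_map f p $ i \<le> f (p + (\<chi> k. c)) $ i"
  unfolding ext_map_def vec_lambda_beta
  by (rule cINF_lower, rule bdd_belowI2[of _ 0])
     (auto intro: less_imp_le map_pos pos_vec_add_const)

lemma ext_map_lessD: "ext_map f p $ i < a \<Longrightarrow> \<exists>c>0. f (p + (\<chi> k. c)) $ i < a"
  unfolding ext_map_def by (auto dest!: cInf_lessD[rotated])

lemma ext_map_nonneg: "nonneg_vec p \<Longrightarrow> 0 \<le> ext_map f p $ i"
  unfolding ext_map_def vec_lambda_beta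
  by (rule cINF_greatest) (auto intro: less_imp_le map_pos pos_vec_add_const)

lemma ext_map_le:
  assumes p: "nonneg_vec p" and x: "pos_vec x" and le: "\<And>k. p $ k \<le> x $ k"
  shows "ext_map f p $ i \<le> f x $ i"
proof (rule field_le_epsilon)
  fix e :: real assume e: "0 < e"
  define m where "m = Min (range (\<lambda>k. x $ k))"
  have m: "0 < m" using x unfolding m_def pos_vec_def by simp
  have fx: "0 < f x $ i" using map_pos[OF x] .
  define c where "c = e * m / f x $ i"
  have c: "0 < c" unfolding c_def using e m fx by simp
  have cm: "0 < 1 + c / m" using c m by (simp add: add_pos_pos)
  have "ext_map f p $ i \<le> f (p + (\<chi> k. c)) $ i" by (rule ext_map_le_shift[OF p c])
  also have "\<dots> \<le> f ((1 + c / m) *\<^sub>R x) $ i"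
  proof (rule map_mono[OF pos_vec_add_const[OF p c] pos_vec_scaleR[OF x cm]])
    fix k
    have "m \<le> x $ k" unfolding m_def by simp
    then have "c \<le> c / m * x $ k" using c m by (simp add: field_simps)
    then show "(p + (\<chi> k. c)) $ k \<le> ((1 + c / m) *\<^sub>R x) $ k"
      using le[of k] by (simp add: algebra_simps)
  qed
  also have "\<dots> = (1 + c / m) * f x $ i" by (rule map_scaleR[OF x cm])
  also have "\<dots> = f x $ i + e" unfolding c_def using m fx by (simp add: field_simps)
  finally show "ext_map f p $ i \<le> f x $ i + e" .
qed

lemma f0_nonneg: "pos_vec x \<Longrightarrow> 0 \<le> f0 C f x $ i"
  by (simp add: f0_nth ext_map_nonneg nonneg_vec_proj0)

lemma f0_le: "pos_vec x \<Longrightarrow> f0 C f x $ i \<le> f x $ i"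
  using map_pos[of x i] ext_map_le[OF nonneg_vec_proj0, of x x C i]
  by (auto simp: f0_nth proj0_def pos_vec_def less_imp_le)

lemma upper_cw_f0_le: "upper_cw (f0 C f) \<le> upper_cw f"
  by (rule upper_cw_mono[OF f0_nonneg f0_le])

lemma f0_subeigen_shifted:
  assumes "upper_cw (f0 C f) < \<rho>"
  obtains y c where "pos_vec y" "0 < c" "\<And>k. k \<in> C \<Longrightarrow> f (proj0 C y + (\<chi> l. c)) $ k < \<rho> * y $ k"
proof -
  obtain y where y: "pos_vec y" and sub: "\<And>k. f0 C f y $ k < \<rho> * y $ k"
    using upper_cw_lessD[OF assms] by blast
  have "\<exists>c>0. f (proj0 C y + (\<chi> l. c)) $ k < \<rho> * y $ k" if "k \<in> C" for k
    using sub[of k] that by (intro ext_map_lessD) (simp add: f0_nth)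
  then obtain c where c: "\<And>k. k \<in> C \<Longrightarrow> 0 < c k \<and> f (proj0 C y + (\<chi> l. c k)) $ k < \<rho> * y $ k"
    by metis
  define c0 where "c0 = Min (insert 1 (c ` C))"
  have c0: "0 < c0" using c unfolding c0_def by (simp add: Min_gr_iff)
  have "f (proj0 C y + (\<chi> l. c0)) $ k < \<rho> * y $ k" if k: "k \<in> C" for k
  proof -
    have "c0 \<le> c k" unfolding c0_def using k by simp
    then have "f (proj0 C y + (\<chi> l. c0)) $ k \<le> f (proj0 C y + (\<chi> l. c k)) $ k"
      using c[OF k] c0 nonneg_vec_proj0[OF y]
      by (intro map_mono pos_vec_add_const) auto
    with c[OF k] show ?thesis by linarith
  qed
  with y c0 that show ?thesis by blast
qed

definition ascent :: "real \<Rightarrow> nat \<Rightarrow> real^'n" where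
  "ascent \<rho> n = ((\<lambda>x. \<chi> i. max (x $ i) (f x $ i / \<rho>)) ^^ n) (\<chi> i. 1)"

lemma ascent_0: "ascent \<rho> 0 = (\<chi> i. 1)"
  by (simp add: ascent_def)

lemma ascent_Suc_nth: "ascent \<rho> (Suc n) $ i = max (ascent \<rho> n $ i) (f (ascent \<rho> n) $ i / \<rho>)"
  by (simp add: ascent_def)

lemma one_le_ascent: "1 \<le> ascent \<rho> n $ i"
  by (induction n) (simp_all add: ascent_0 ascent_Suc_nth le_max_iff_disj)

lemma pos_vec_ascent: "pos_vec (ascent \<rho> n)"
  using one_le_ascent unfolding pos_vec_def by (meson less_le_trans zero_less_one)

lemma ascent_mono: "m \<le> n \<Longrightarrow> ascent \<rho> m $ i \<le> ascent \<rho> n $ i"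
  using lift_Suc_mono_le[of "\<lambda>n. ascent \<rho> n $ i"] by (simp add: ascent_Suc_nth)

lemma map_ascent_le:
  assumes "0 < \<rho>"
  shows "f (ascent \<rho> n) $ i \<le> \<rho> * ascent \<rho> (Suc n) $ i"
proof -
  have "f (ascent \<rho> n) $ i / \<rho> \<le> ascent \<rho> (Suc n) $ i" by (simp add: ascent_Suc_nth)
  with assms show ?thesis by (simp add: divide_le_eq mult.commute)
qed

lemma ascent_super_persists:
  assumes \<rho>: "0 < \<rho>" and super: "\<rho> * ascent \<rho> m $ i \<le> f (ascent \<rho> m) $ i" and "m \<le> n"
  shows "\<rho> * ascent \<rho> n $ i \<le> f (ascent \<rho> n) $ i"
  using \<open>m \<le> n\<close> super
proof (induction n rule: dec_induct)
  case (step n)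
  then have "ascent \<rho> (Suc n) $ i = f (ascent \<rho> n) $ i / \<rho>"
    using \<rho> by (simp add: ascent_Suc_nth le_divide_eq mult.commute)
  moreover have "f (ascent \<rho> n) $ i \<le> f (ascent \<rho> (Suc n)) $ i"
    by (rule map_mono[OF pos_vec_ascent pos_vec_ascent ascent_mono]) simp
  ultimately show ?case using \<rho> by simp
qed

lemma ascent_super_if_unbounded:
  assumes \<rho>: "0 < \<rho>" and unbounded: "\<not> bdd_above (range (\<lambda>n. ascent \<rho> n $ i))"
  obtains n where "\<rho> * ascent \<rho> n $ i \<le> f (ascent \<rho> n) $ i"
proof (rule ccontr)
  assume "\<not> thesis"
  with that have sub: "f (ascent \<rho> n) $ i < \<rho> * ascent \<rho> n $ i" for n by (meson not_le)
  have "ascent \<rho> n $ i \<le> 1" for n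
  proof (induction n)
    case (Suc n)
    with sub[of n] \<rho> show ?case by (simp add: ascent_Suc_nth divide_less_eq mult.commute)
  qed (simp add: ascent_0)
  then have "bdd_above (range (\<lambda>n. ascent \<rho> n $ i))" by (intro bdd_aboveI2[where M = 1]) simp
  with unbounded show False by simp
qed

lemma ascent_unbounded_if_arc:
  assumes \<rho>: "0 < \<rho>" and ij: "arc f i j" and unbounded: "\<not> bdd_above (range (\<lambda>n. ascent \<rho> n $ j))"
  shows "\<not> bdd_above (range (\<lambda>n. ascent \<rho> n $ i))"
proof
  assume "bdd_above (range (\<lambda>n. ascent \<rho> n $ i))"
  then obtain K where K: "\<And>n. ascent \<rho> n $ i \<le> K" by (auto simp: bdd_above_def)
  define v where "v t = ((\<chi> k. exp (if k = j then t else 0)) :: real^'n)" for t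
  have "\<forall>\<^sub>F t in at_top. \<rho> * K < f (v t) $ i"
    using ij unfolding arc_def v_def filterlim_at_top_dense by blast
  then obtain T where T: "\<And>t. T \<le> t \<Longrightarrow> \<rho> * K < f (v t) $ i"
    unfolding eventually_at_top_linorder by blast
  obtain n where n: "exp T < ascent \<rho> n $ j"
    using unbounded by (auto simp: bdd_above_def not_le)
  have Xj: "0 < ascent \<rho> n $ j" using pos_vec_ascent by (simp add: pos_vec_def)
  define t where "t = ln (ascent \<rho> n $ j)"
  have "T \<le> t" unfolding t_def using n Xj by (metis exp_gt_zero less_imp_le ln_exp ln_le_cancel_iff)
  have "f (v t) $ i \<le> f (ascent \<rho> n) $ i"
    by (rule map_mono[OF _ pos_vec_ascent]) (use Xj one_le_ascent in \<open>auto simp: v_def t_def pos_vec_def\<close>)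
  also have "\<dots> \<le> \<rho> * ascent \<rho> (Suc n) $ i" by (rule map_ascent_le[OF \<rho>])
  also have "\<dots> \<le> \<rho> * K" using K \<rho> by simp
  finally show False using T[OF \<open>T \<le> t\<close>] by simp
qed

lemma ascent_unbounded_if_reaches:
  assumes "0 < \<rho>" "(arc f)\<^sup>*\<^sup>* i j" "\<not> bdd_above (range (\<lambda>n. ascent \<rho> n $ j))"
  shows "\<not> bdd_above (range (\<lambda>n. ascent \<rho> n $ i))"
  using assms(2)
proof (induction rule: converse_rtranclp_induct)
  case base
  show ?case by (rule assms(3))
next
  case (step y z)
  show ?case by (rule ascent_unbounded_if_arc[OF assms(1) step.hyps(1) step.IH])
qed

lemma pos_vec_funpow: "pos_vec ((f ^^ k) (\<chi> i. 1))"
  by (induction k) (simp_all add: pos_vec_one pos_vec_map)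

lemma funpow_le_ascent:
  assumes \<rho>: "0 < \<rho>"
  shows "(f ^^ k) (\<chi> i. 1) $ i \<le> \<rho> ^ k * ascent \<rho> k $ i"
proof (induction k arbitrary: i)
  case 0
  then show ?case by (simp add: ascent_0)
next
  case (Suc k)
  have \<rho>k: "0 < \<rho> ^ k" using \<rho> by simp
  have "(f ^^ Suc k) (\<chi> i. 1) $ i = f ((f ^^ k) (\<chi> i. 1)) $ i" by simp
  also have "\<dots> \<le> f (\<rho> ^ k *\<^sub>R ascent \<rho> k) $ i"
    by (rule map_mono[OF pos_vec_funpow pos_vec_scaleR[OF pos_vec_ascent \<rho>k]]) (simp add: Suc.IH)
  also have "\<dots> = \<rho> ^ k * f (ascent \<rho> k) $ i" by (rule map_scaleR[OF pos_vec_ascent \<rho>k])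
  also have "\<dots> \<le> \<rho> ^ Suc k * ascent \<rho> (Suc k) $ i"
    using map_ascent_le[OF \<rho>, of k i] \<rho>k by (simp add: mult.assoc)
  finally show ?case .
qed

text \<open>The witness is the minimum of the normalised iterates \<open>\<rho>\<^sup>-\<^sup>k f\<^sup>k(1)\<close>, \<open>k \<le> N\<close>:
  \<open>f\<close> maps each of them to \<open>\<rho>\<close> times the next one, and the hypothesis bounds the
  \<open>(N+1)\<close>-st by the \<open>0\<close>-th on \<open>C\<close>.\<close>
lemma subeigen_if_funpow_le:
  assumes \<rho>: "0 < \<rho>" and le: "\<And>j. j \<in> C \<Longrightarrow> (f ^^ Suc N) (\<chi> i. 1) $ j \<le> \<rho> ^ Suc N"
  obtains y where "pos_vec y" "\<And>j. j \<in> C \<Longrightarrow> f y $ j \<le> \<rho> * y $ j"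
proof -
  define a where "a k = (1 / \<rho> ^ k) *\<^sub>R (f ^^ k) (\<chi> i. 1)" for k
  have pos_a: "pos_vec (a k)" for k
    unfolding a_def using \<rho> by (simp add: pos_vec_scaleR pos_vec_funpow)
  define y where "y = (\<chi> j. Min ((\<lambda>k. a k $ j) ` {..N}))"
  have y: "pos_vec y" using pos_a unfolding y_def pos_vec_def by (simp add: Min_gr_iff)
  have y_le: "y $ j \<le> a k $ j" if "k \<le> N" for k j unfolding y_def using that by simp
  have f_le: "f y $ j \<le> \<rho> * a (Suc k) $ j" if "k \<le> N" for k j
  proof -
    have "f y $ j \<le> f (a k) $ j" using y_le[OF that] by (intro map_mono[OF y pos_a])
    also have "\<dots> = \<rho> * a (Suc k) $ j"
      unfolding a_def using \<rho> by (simp add: map_scaleR pos_vec_funpow)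
    finally show ?thesis .
  qed
  have "f y $ j \<le> \<rho> * y $ j" if j: "j \<in> C" for j
  proof -
    have "Min ((\<lambda>k. a k $ j) ` {..N}) \<in> (\<lambda>k. a k $ j) ` {..N}" by (rule Min_in) auto
    then obtain k where k: "k \<le> N" "y $ j = a k $ j"
      unfolding y_def vec_lambda_beta by (meson atMost_iff imageE)
    show ?thesis
    proof (cases k)
      case 0
      have "a (Suc N) $ j \<le> 1" using le[OF j] \<rho> unfolding a_def by (simp add: divide_le_eq)
      moreover have "y $ j = 1" using k 0 unfolding a_def by simp
      ultimately have "\<rho> * a (Suc N) $ j \<le> \<rho> * y $ j" using \<rho> by simp
      with f_le[of N j] show ?thesis by simp
    next
      case (Suc k')
      with k f_le[of k' j] show ?thesis by simp
    qed
  qed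
  with y that show ?thesis by blast
qed

end

section \<open>Multiplicatively convex maps\<close>

locale mult_convex_monotone_homogeneous = monotone_homogeneous f for f :: "real^'n \<Rightarrow> real^'n" +
  assumes mult_convex: "mult_convex f"
begin

lemma convex_on_ln_map_nth_line:
  assumes x: "pos_vec x"
  shows "convex_on UNIV (\<lambda>u. ln (f (\<chi> k. if k = j then exp u else x $ k) $ i))"
proof -
  define Y where "Y = ((\<chi> k. if k = j then 0 else ln (x $ k)) :: real^'n)"
  have "(\<chi> k. if k = j then exp u else x $ k) = (\<chi> k. exp ((Y + u *\<^sub>R axis j 1) $ k))" for u
    using x by (simp add: Y_def pos_vec_def vec_eq_iff axis_def)
  moreover have "convex_on UNIV (\<lambda>u. ln (f (\<chi> k. exp ((Y + u *\<^sub>R axis j 1) $ k)) $ i))"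
    using convex_on_line[of "\<lambda>y. ln (f (\<chi> k. exp (y $ k)) $ i)" Y "axis j 1"] mult_convex
    unfolding mult_convex_def by blast
  ultimately show ?thesis by (simp only:)
qed

lemma map_nth_antimono_if_not_arc:
  assumes no_arc: "\<not> arc f i j" and x: "pos_vec x" and y: "pos_vec y"
    and eq: "\<And>k. k \<noteq> j \<Longrightarrow> x $ k = y $ k" and le: "x $ j \<le> y $ j"
  shows "f y $ i \<le> f x $ i"
proof -
  define w where "w u = ((\<chi> k. if k = j then exp u else x $ k) :: real^'n)" for u
  have w: "pos_vec (w u)" for u using x by (simp add: w_def pos_vec_def)
  have convex: "convex_on UNIV (\<lambda>u. ln (f (w u) $ i))"
    unfolding w_def by (rule convex_on_ln_map_nth_line[OF x])
  obtain B where "\<And>u. f (w u) $ i \<le> B"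
    using bounded_on_line_if_not_arc[OF no_arc x] unfolding w_def by blast
  then have bound: "ln (f (w u) $ i) \<le> ln B" for u using map_pos[OF w] by (rule ln_mono)
  have "ln (f (w (ln (y $ j))) $ i) \<le> ln (f (w (ln (x $ j))) $ i)"
    by (rule convex_on_bounded_above_antimono[OF convex bound], rule ln_mono[OF le])
       (use x in \<open>simp add: pos_vec_def\<close>)
  moreover have "w (ln (x $ j)) = x" "w (ln (y $ j)) = y"
    using x y eq by (auto simp: w_def pos_vec_def vec_eq_iff)
  ultimately show ?thesis using map_pos x y by simp
qed

lemma map_nth_eq_if_not_arc:
  assumes no_arc: "\<not> arc f i j" and x: "pos_vec x" and y: "pos_vec y"
    and eq: "\<And>k. k \<noteq> j \<Longrightarrow> x $ k = y $ k"
  shows "f x $ i = f y $ i"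
proof -
  have eq': "\<And>k. k \<noteq> j \<Longrightarrow> y $ k = x $ k" using eq by simp
  have x_le: "x $ k \<le> y $ k" if "x $ j \<le> y $ j" for k
    using eq[of k] that by (cases "k = j") auto
  have y_le: "y $ k \<le> x $ k" if "y $ j \<le> x $ j" for k
    using eq[of k] that by (cases "k = j") auto
  show ?thesis
  proof (cases "x $ j \<le> y $ j")
    case True
    show ?thesis
    proof (rule antisym)
      show "f x $ i \<le> f y $ i" by (rule map_mono[OF x y x_le[OF True]])
      show "f y $ i \<le> f x $ i" by (rule map_nth_antimono_if_not_arc[OF no_arc x y eq True])
    qed
  next
    case False
    then have le: "y $ j \<le> x $ j" by simp
    show ?thesis
    proof (rule antisym)
      show "f x $ i \<le> f y $ i" by (rule map_nth_antimono_if_not_arc[OF no_arc y x eq' le])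
      show "f y $ i \<le> f x $ i" by (rule map_mono[OF y x y_le[OF le]])
    qed
  qed
qed

lemma map_nth_eq_if_eq_on_arcs:
  assumes x: "pos_vec x" and y: "pos_vec y" and eq: "\<And>k. arc f i k \<Longrightarrow> x $ k = y $ k"
  shows "f x $ i = f y $ i"
proof -
  have swap: "f (\<chi> k. if k \<in> A then y $ k else x $ k) $ i = f x $ i" if "\<forall>k\<in>A. \<not> arc f i k" for A
    using finite[of A] that
  proof (induction A rule: finite_induct)
    case (insert a A)
    have "f (\<chi> k. if k \<in> insert a A then y $ k else x $ k) $ i
        = f (\<chi> k. if k \<in> A then y $ k else x $ k) $ i"
      by (rule map_nth_eq_if_not_arc[where j = a]) (use x y insert in \<open>auto simp: pos_vec_def\<close>)
    with insert show ?case by simp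
  qed simp
  have "\<forall>k\<in>{k. x $ k \<noteq> y $ k}. \<not> arc f i k" using eq by blast
  from swap[OF this] have "f (\<chi> k. if k \<in> {k. x $ k \<noteq> y $ k} then y $ k else x $ k) $ i = f x $ i" .
  moreover have "(\<chi> k. if k \<in> {k. x $ k \<noteq> y $ k} then y $ k else x $ k) = y"
    by (simp add: vec_eq_iff)
  ultimately show ?thesis by simp
qed

lemma map_nth_mono_on_arcs:
  assumes x: "pos_vec x" and y: "pos_vec y" and le: "\<And>k. arc f i k \<Longrightarrow> x $ k \<le> y $ k"
  shows "f x $ i \<le> f y $ i"
proof -
  define z where "z = (\<chi> k. if arc f i k then x $ k else y $ k)"
  have z: "pos_vec z" using x y by (simp add: z_def pos_vec_def)
  have "f x $ i = f z $ i" by (rule map_nth_eq_if_eq_on_arcs[OF x z]) (simp add: z_def)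
  also have "\<dots> \<le> f y $ i" by (rule map_mono[OF z y]) (simp add: z_def le)
  finally show ?thesis .
qed

lemma le_ext_map:
  assumes p: "nonneg_vec p" and x: "pos_vec x" and le: "\<And>k. arc f i k \<Longrightarrow> x $ k \<le> p $ k"
  shows "f x $ i \<le> ext_map f p $ i"
  unfolding ext_map_def vec_lambda_beta
proof (rule cINF_greatest)
  fix c :: real assume "c \<in> {0<..}"
  then have c: "0 < c" by simp
  show "f x $ i \<le> f (p + (\<chi> k. c)) $ i"
    by (rule map_nth_mono_on_arcs[OF x pos_vec_add_const[OF p c]]) (use le c in force)
qed simp

lemma f0_eq_on_final:
  assumes C: "C \<in> final_classes f" and k: "k \<in> C" and y: "pos_vec y"
  shows "f0 C f y $ k = f y $ k"
proof -
  have "ext_map f (proj0 C y) $ k \<le> f y $ k"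
    by (rule ext_map_le[OF nonneg_vec_proj0[OF y] y])
       (use y in \<open>auto simp: proj0_def pos_vec_def less_imp_le\<close>)
  moreover have "f y $ k \<le> ext_map f (proj0 C y) $ k"
    by (rule le_ext_map[OF nonneg_vec_proj0[OF y] y])
       (use C k in \<open>auto simp: proj0_def final_classes_iff arc_closed_def\<close>)
  ultimately show ?thesis using k by (simp add: f0_nth)
qed

lemma subeigen_union:
  assumes closed: "arc_closed f D" and disjoint: "C \<inter> D = {}"
    and x': "pos_vec x'" and sub_D: "\<And>k. k \<in> D \<Longrightarrow> f x' $ k < \<rho> * x' $ k"
    and y: "pos_vec y" and c: "0 < c"
    and sub_C: "\<And>k. k \<in> C \<Longrightarrow> f (proj0 C y + (\<chi> l. c)) $ k < \<rho> * y $ k"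
  obtains x where "pos_vec x" "\<And>k. k \<in> C \<union> D \<Longrightarrow> f x $ k < \<rho> * x $ k"
proof -
  define M where "M = Max (range (\<lambda>k. x' $ k))"
  have x'_M: "x' $ k \<le> M" for k unfolding M_def by simp
  have M: "0 < M" using x'_M[of undefined] x' unfolding pos_vec_def by (meson less_le_trans)
  define s where "s = c / M"
  have s: "0 < s" unfolding s_def using c M by simp
  have s_x': "s * x' $ k \<le> c" for k
    using mult_left_mono[OF x'_M[of k] less_imp_le[OF s]] M unfolding s_def by simp
  define x where "x = (\<chi> k. if k \<in> C then y $ k else s * x' $ k)"
  have x: "pos_vec x" using y x' s unfolding x_def pos_vec_def by simp
  have "f x $ k < \<rho> * x $ k" if k: "k \<in> C \<union> D" for k
  proof (cases "k \<in> C")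
    case True
    have "f x $ k \<le> f (proj0 C y + (\<chi> l. c)) $ k"
      by (rule map_mono[OF x pos_vec_add_const[OF nonneg_vec_proj0[OF y] c]])
         (use s_x' c in \<open>simp add: x_def proj0_def\<close>)
    also have "\<dots> < \<rho> * x $ k" using sub_C[OF True] True by (simp add: x_def)
    finally show ?thesis .
  next
    case False
    with k have kD: "k \<in> D" by simp
    have "f x $ k = f (s *\<^sub>R x') $ k"
      by (rule map_nth_eq_if_eq_on_arcs[OF x pos_vec_scaleR[OF x' s]])
         (use kD closed disjoint in \<open>auto simp: x_def arc_closed_def\<close>)
    also have "\<dots> = s * f x' $ k" by (rule map_scaleR[OF x' s])
    also have "\<dots> < s * (\<rho> * x' $ k)" using sub_D[OF kD] s by simp
    finally show ?thesis using False by (simp add: x_def algebra_simps)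
  qed
  with x that show ?thesis by blast
qed

lemma subeigen_on_arc_closed:
  assumes less: "\<And>C. C \<in> sccs f \<Longrightarrow> upper_cw (f0 C f) < \<rho>" and "arc_closed f S"
  shows "\<exists>x. pos_vec x \<and> (\<forall>i\<in>S. f x $ i < \<rho> * x $ i)"
  using finite[of S] \<open>arc_closed f S\<close>
proof (induction S rule: finite_psubset_induct)
  case (psubset S)
  show ?case
  proof (cases "S = {}")
    case True
    with pos_vec_one show ?thesis by blast
  next
    case False
    then obtain i where i: "i \<in> S" and closed: "arc_closed f (S - scc_of f i)"
      using arc_closed_Diff_scc_of[OF psubset.prems] by blast
    have "S - scc_of f i \<subset> S" using i scc_of_self by blast
    from psubset.IH[OF this closed] obtain x' where
      x': "pos_vec x'" "\<forall>k\<in>S - scc_of f i. f x' $ k < \<rho> * x' $ k" by blast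
    have "scc_of f i \<in> sccs f" by (simp add: sccs_def)
    then obtain y c where
      y: "pos_vec y" "0 < c" "\<And>k. k \<in> scc_of f i \<Longrightarrow> f (proj0 (scc_of f i) y + (\<chi> l. c)) $ k < \<rho> * y $ k"
      using f0_subeigen_shifted[OF less] by metis
    obtain x where "pos_vec x" "\<And>k. k \<in> scc_of f i \<union> (S - scc_of f i) \<Longrightarrow> f x $ k < \<rho> * x $ k"
      by (rule subeigen_union[OF closed _ x'(1) _ y]) (use x'(2) in auto)
    then show ?thesis by blast
  qed
qed

lemma upper_cw_le_Max_sccs: "upper_cw f \<le> Max ((\<lambda>C. upper_cw (f0 C f)) ` sccs f)"
proof (rule dense_ge)
  fix \<rho> assume "Max ((\<lambda>C. upper_cw (f0 C f)) ` sccs f) < \<rho>"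
  then have "\<And>C. C \<in> sccs f \<Longrightarrow> upper_cw (f0 C f) < \<rho>"
    using finite_sccs by (auto simp: sccs_def)
  moreover have "arc_closed f UNIV" by (simp add: arc_closed_def)
  ultimately obtain x where x: "pos_vec x" and "\<forall>i. f x $ i < \<rho> * x $ i"
    using subeigen_on_arc_closed by blast
  then show "upper_cw f \<le> \<rho>"
    by (intro upper_cw_le[OF _ x]) (auto intro: less_imp_le map_pos)
qed

lemma exists_le_ratio_if_final_subeigen:
  assumes C: "C \<in> final_classes f" and y: "pos_vec y" and sub: "\<And>k. k \<in> C \<Longrightarrow> f y $ k \<le> a * y $ k"
    and x: "pos_vec x"
  obtains k where "f x $ k \<le> a * x $ k"
proof -
  have "C \<noteq> {}" using C scc_of_self by (auto simp: final_classes_iff)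
  then have "Max ((\<lambda>k. x $ k / y $ k) ` C) \<in> (\<lambda>k. x $ k / y $ k) ` C" by (intro Max_in) auto
  then obtain k where k: "k \<in> C" and t: "Max ((\<lambda>k. x $ k / y $ k) ` C) = x $ k / y $ k" by blast
  define t where "t = x $ k / y $ k"
  have xk: "0 < x $ k" and yk: "0 < y $ k" using x y by (simp_all add: pos_vec_def)
  then have t0: "0 < t" by (simp add: t_def)
  have "x $ l \<le> t * y $ l" if "l \<in> C" for l
  proof -
    have "x $ l / y $ l \<le> Max ((\<lambda>k. x $ k / y $ k) ` C)" using that by (intro Max_ge) auto
    with t have "x $ l / y $ l \<le> t" by (simp add: t_def)
    then show ?thesis using y by (simp add: pos_vec_def divide_le_eq mult.commute)
  qed
  then have "f x $ k \<le> f (t *\<^sub>R y) $ k"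
    using C k by (intro map_nth_mono_on_arcs[OF x pos_vec_scaleR[OF y t0]])
      (auto simp: final_classes_iff arc_closed_def)
  also have "\<dots> = t * f y $ k" by (rule map_scaleR[OF y t0])
  also have "\<dots> \<le> t * (a * y $ k)" using sub[OF k] t0 by simp
  also have "\<dots> = a * x $ k" using yk by (simp add: t_def)
  finally show ?thesis by (rule that)
qed

lemma lower_cw_le_final:
  assumes C: "C \<in> final_classes f"
  shows "lower_cw f \<le> upper_cw (f0 C f)"
proof (rule dense_ge)
  fix a assume "upper_cw (f0 C f) < a"
  then obtain y where y: "pos_vec y" and sub: "\<And>k. f0 C f y $ k < a * y $ k"
    using upper_cw_lessD by blast
  have sub_C: "f y $ k \<le> a * y $ k" if "k \<in> C" for k
    using sub[of k] f0_eq_on_final[OF C that y] by simp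
  show "lower_cw f \<le> a"
  proof (rule lower_cw_le)
    fix x :: "real^'n" assume "pos_vec x"
    from exists_le_ratio_if_final_subeigen[OF C y sub_C this]
    show "\<exists>k. f x $ k \<le> a * x $ k" by blast
  qed
qed

lemma upper_cw_f0_le_if_ascent_bounded:
  assumes \<rho>: "0 < \<rho>" and C: "C \<in> final_classes f"
    and bounded: "\<And>j. j \<in> C \<Longrightarrow> bdd_above (range (\<lambda>n. ascent \<rho> n $ j))"
  shows "upper_cw (f0 C f) \<le> \<rho>"
proof (rule dense_ge)
  fix \<rho>' assume "\<rho> < \<rho>'"
  have "bdd_above (\<Union>j\<in>C. range (\<lambda>n. ascent \<rho> n $ j))" using bounded by simp
  then obtain K where K: "\<And>n j. j \<in> C \<Longrightarrow> ascent \<rho> n $ j \<le> K"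
    by (auto simp: bdd_above_def)
  define K' where "K' = max K 1"
  have K': "0 < K'" "\<And>n j. j \<in> C \<Longrightarrow> ascent \<rho> n $ j \<le> K'"
    using K unfolding K'_def by (auto simp: le_max_iff_disj)
  have q: "0 < \<rho> / \<rho>'" "\<rho> / \<rho>' < 1" using \<rho> \<open>\<rho> < \<rho>'\<close> by simp_all
  obtain N where N: "(\<rho> / \<rho>') ^ N < 1 / K'"
    using real_arch_pow_inv[of "1 / K'" "\<rho> / \<rho>'"] K' q by auto
  have "(f ^^ Suc N) (\<chi> i. 1) $ j \<le> \<rho>' ^ Suc N" if "j \<in> C" for j
  proof -
    have "(\<rho> / \<rho>') ^ Suc N * K' = (\<rho> / \<rho>') * ((\<rho> / \<rho>') ^ N * K')" by simp
    also have "\<dots> \<le> (\<rho> / \<rho>') ^ N * K'"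
      using q K' by (intro mult_left_le_one_le) auto
    also have "\<dots> \<le> 1" using N K' by (simp add: less_divide_eq less_imp_le)
    finally have "\<rho> ^ Suc N * K' \<le> \<rho>' ^ Suc N"
      using \<rho> \<open>\<rho> < \<rho>'\<close> by (simp add: power_divide divide_le_eq)
    moreover have "(f ^^ Suc N) (\<chi> i. 1) $ j \<le> \<rho> ^ Suc N * K'"
      using funpow_le_ascent[OF \<rho>, of "Suc N" j] K'(2)[OF that, of "Suc N"] \<rho>
      by (meson order.trans mult_left_mono zero_le_power less_imp_le)
    ultimately show ?thesis by simp
  qed
  then obtain y where y: "pos_vec y" and sub: "\<And>j. j \<in> C \<Longrightarrow> f y $ j \<le> \<rho>' * y $ j"
    using subeigen_if_funpow_le \<rho> \<open>\<rho> < \<rho>'\<close> by (metis order.strict_trans)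
  have sub_f0: "f0 C f y $ j \<le> \<rho>' * y $ j" for j
    using sub[of j] f0_eq_on_final[OF C _ y, of j] y \<rho> \<open>\<rho> < \<rho>'\<close>
    by (cases "j \<in> C") (auto simp: f0_nth pos_vec_def less_imp_le)
  show "upper_cw (f0 C f) \<le> \<rho>'" by (rule upper_cw_le[of "f0 C f", OF f0_nonneg y sub_f0])
qed

lemma lower_cw_ge_if_less_final:
  assumes \<rho>: "0 < \<rho>" and less: "\<And>C. C \<in> final_classes f \<Longrightarrow> \<rho> < upper_cw (f0 C f)"
  shows "\<rho> \<le> lower_cw f"
proof -
  have unbounded: "\<not> bdd_above (range (\<lambda>n. ascent \<rho> n $ i))" for i
  proof -
    obtain C j where C: "C \<in> final_classes f" and j: "j \<in> C" and ij: "(arc f)\<^sup>*\<^sup>* i j"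
      by (rule final_class_reachable)
    obtain j' where j': "j' \<in> C" and j'_unbounded: "\<not> bdd_above (range (\<lambda>n. ascent \<rho> n $ j'))"
      using upper_cw_f0_le_if_ascent_bounded[OF \<rho> C] less[OF C] by force
    have "(arc f)\<^sup>*\<^sup>* i j'"
      using C j j' ij by (auto simp: final_classes_iff intro: reaches_in_scc_of rtranclp_trans)
    then show ?thesis by (rule ascent_unbounded_if_reaches[OF \<rho> _ j'_unbounded])
  qed
  have "\<exists>n. \<rho> * ascent \<rho> n $ i \<le> f (ascent \<rho> n) $ i" for i
    using ascent_super_if_unbounded[OF \<rho> unbounded] by blast
  then obtain n where n: "\<And>i. \<rho> * ascent \<rho> (n i) $ i \<le> f (ascent \<rho> (n i)) $ i"
    by metis
  define N where "N = Max (range n)"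
  have "\<rho> * ascent \<rho> N $ i \<le> f (ascent \<rho> N) $ i" for i
    by (rule ascent_super_persists[OF \<rho> n]) (simp add: N_def)
  then show ?thesis by (rule lower_cw_ge[OF bdd_above_Min_ratios pos_vec_ascent])
qed

lemma upper_cw_eq_Max_sccs: "upper_cw f = Max ((\<lambda>C. upper_cw (f0 C f)) ` sccs f)"
proof (rule antisym)
  have "sccs f \<noteq> {}" by (simp add: sccs_def)
  with finite_sccs upper_cw_f0_le
  show "Max ((\<lambda>C. upper_cw (f0 C f)) ` sccs f) \<le> upper_cw f" by (simp add: Max_le_iff)
qed (rule upper_cw_le_Max_sccs)

lemma lower_cw_eq_Min_final_classes:
  "lower_cw f = Min ((\<lambda>C. upper_cw (f0 C f)) ` final_classes f)"
proof (rule antisym)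
  obtain C where "C \<in> final_classes f"
    using final_class_reachable[where f = f and i = undefined] by blast
  then have nonempty: "final_classes f \<noteq> {}" by blast
  with finite_final_classes lower_cw_le_final
  show "lower_cw f \<le> Min ((\<lambda>C. upper_cw (f0 C f)) ` final_classes f)" by (simp add: Min_ge_iff)
  show "Min ((\<lambda>C. upper_cw (f0 C f)) ` final_classes f) \<le> lower_cw f"
  proof (rule dense_le)
    fix \<rho> assume less_Min: "\<rho> < Min ((\<lambda>C. upper_cw (f0 C f)) ` final_classes f)"
    show "\<rho> \<le> lower_cw f"
    proof (cases "0 < \<rho>")
      case True
      moreover have "\<And>C. C \<in> final_classes f \<Longrightarrow> \<rho> < upper_cw (f0 C f)"
        using less_Min finite_final_classes nonempty by (simp add: Min_gr_iff)
      ultimately show ?thesis by (rule lower_cw_ge_if_less_final)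
    next
      case False
      with lower_cw_nonneg show ?thesis by linarith
    qed
  qed
qed

end

theorem theorem4p3:
  fixes f :: "real^'n \<Rightarrow> real^'n"
  assumes "\<And>x. pos_vec x \<Longrightarrow> pos_vec (f x)"
    and "order_preserving_pos f"
    and "homogeneous_pos f"
    and "mult_convex f"
  shows "upper_cw f = Max ((\<lambda>C. upper_cw (f0 C f)) ` sccs f)
    \<and> lower_cw f = Min ((\<lambda>C. upper_cw (f0 C f)) ` final_classes f)"
proof -
  interpret mult_convex_monotone_homogeneous f
    using assms by unfold_locales
  show ?thesis using upper_cw_eq_Max_sccs lower_cw_eq_Min_final_classes ..
qed

end
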